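(* Let $G$ be a finitely generated group of polynomial growth of degree $d$, i.e. for some (equivalently any) finite symmetric generating set $S$ containing the identity there is $C>0$ with $|S^n|\le Cn^d$ for all $n\in\mathbb{N}$. Then $G$ has uniformly $(1/d)$-almost flat coset spaces.
   Context: $S^n=\{s_1\cdots s_n:s_i\in S\}$. For a finite-index subgroup $K\le G$, $\operatorname{diam}_S(G/K)=\min\{n\in\mathbb{N}:S^nK=G\}$. $G$ has uniformly $\alpha$-almost flat coset spaces if there exists $\varepsilon>0$ such that $\operatorname{diam}_S(G/K)\ge\varepsilon[G:K]^\alpha$ for every finite-index subgroup $K\le G$ (this does not depend on $S$). *)

theory Defs
  imports "HOL-Algebra.Algebra" "HOL-Analysis.Analysis"
begin

primrec set_power :: "('a, 'b) monoid_scheme \<Rightarrow> 'a set \<Rightarrow> nat \<Rightarrow> 'a set" where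
  "set_power G S 0 = {\<one>\<^bsub>G\<^esub>}"
| "set_power G S (Suc n) = set_mult G (set_power G S n) S"

definition coset_diam :: "('a, 'b) monoid_scheme \<Rightarrow> 'a set \<Rightarrow> 'a set \<Rightarrow> nat" where
  "coset_diam G S K = (LEAST n. n \<ge> 1 \<and> set_mult G (set_power G S n) K = carrier G)"

definition unif_almost_flat_cosets :: "('a, 'b) monoid_scheme \<Rightarrow> 'a set \<Rightarrow> real \<Rightarrow> bool" where
  "unif_almost_flat_cosets G S \<alpha> \<longleftrightarrow>
     (\<exists>\<epsilon>>0. \<forall>K. subgroup K G \<and> finite (rcosets\<^bsub>G\<^esub> K) \<longrightarrow>
        real (coset_diam G S K) \<ge> \<epsilon> * real (card (rcosets\<^bsub>G\<^esub> K)) powr \<alpha>)"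

end

theory Submission
  imports Defs
begin

text \<open>If S^n K = G, then every right coset of K has the form K s^-1 with s in S^n, hence
  [G:K] <= |S^n| <= C n^d; for n = diam_S(G/K) this reads diam_S(G/K) >= C^(-1/d) [G:K]^(1/d).
  The diameter is finite since the balls S^n increase and exhaust G, while only finitely many
  cosets have to be reached.\<close>

lemma (in group) set_power_subset_carrier:
  assumes "S \<subseteq> carrier G"
  shows "set_power G S n \<subseteq> carrier G"
  by (induction n) (use assms in \<open>auto simp: set_mult_def\<close>)

lemma finite_set_power:
  assumes "finite S"
  shows "finite (set_power G S n)"
  by (induction n) (simp_all add: set_mult_def assms)

lemma (in group) set_power_one:
  assumes "S \<subseteq> carrier G"
  shows "set_power G S 1 = S"
  using assms by (force simp: set_mult_def)

lemma (in group) mult_mem_set_power_add: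
  assumes "S \<subseteq> carrier G" "x \<in> set_power G S m" "y \<in> set_power G S n"
  shows "x \<otimes> y \<in> set_power G S (m + n)"
  using assms(3)
proof (induction n arbitrary: y)
  case 0
  have "x \<in> carrier G"
    using assms(1,2) set_power_subset_carrier by blast
  with 0 show ?case
    using assms(2) by simp
next
  case (Suc n)
  then obtain y' s where y': "y' \<in> set_power G S n" "s \<in> S" "y = y' \<otimes> s"
    by (auto simp: set_mult_def)
  then have "x \<otimes> y = (x \<otimes> y') \<otimes> s"
    using assms set_power_subset_carrier by (blast intro: m_assoc [symmetric])
  with Suc.IH y' show ?case
    by (auto simp: set_mult_def)
qed

lemma (in group) mono_set_power:
  assumes "S \<subseteq> carrier G" "\<one> \<in> S"
  shows "mono (set_power G S)"
  unfolding mono_iff_le_Suc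
proof
  fix n
  show "set_power G S n \<subseteq> set_power G S (Suc n)"
    using assms set_power_subset_carrier[OF assms(1), of n]
    by (force simp: set_mult_def)
qed

lemma (in group) UN_set_power_eq_carrier:
  assumes "S \<subseteq> carrier G" "\<forall>s\<in>S. inv s \<in> S" "generate G S = carrier G"
  shows "(\<Union>n. set_power G S n) = carrier G"
proof
  show "(\<Union>n. set_power G S n) \<subseteq> carrier G"
    using set_power_subset_carrier[OF assms(1)] by blast
  have "\<exists>n. g \<in> set_power G S n" if "g \<in> generate G S" for g
    using that
  proof (induction rule: generate.induct)
    case one
    then show ?case by (metis set_power.simps(1) singletonI)
  next
    case (incl s)
    then show ?case using set_power_one[OF assms(1)] by blast
  next
    case (inv s)
    then show ?case using assms(2) set_power_one[OF assms(1)] by blast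
  next
    case (eng g h)
    then show ?case using mult_mem_set_power_add[OF assms(1)] by blast
  qed
  then show "carrier G \<subseteq> (\<Union>n. set_power G S n)"
    using assms(3) by blast
qed

lemma (in group) mem_l_coset_iff_rcos_inv_eq:
  assumes "subgroup K G" "a \<in> carrier G" "g \<in> carrier G"
  shows "g \<in> a <# K \<longleftrightarrow> K #> inv g = K #> inv a"
proof -
  interpret K: subgroup K G by fact
  have "g \<in> a <# K \<longleftrightarrow> (\<exists>k\<in>K. g = a \<otimes> k)"
    by (auto simp: l_coset_def)
  also have "\<dots> \<longleftrightarrow> inv a \<otimes> g \<in> K"
    using assms inv_solve_left inv_solve_left' K.mem_carrier by (metis inv_closed m_closed)
  also have "\<dots> \<longleftrightarrow> inv g \<otimes> a \<in> K"
    using assms K.m_inv_closed by (metis inv_closed inv_inv inv_mult_group)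
  also have "\<dots> \<longleftrightarrow> inv g \<in> K #> inv a"
    using assms by (simp add: K.rcos_module is_group)
  also have "\<dots> \<longleftrightarrow> K #> inv g = K #> inv a"
    using assms by (metis inv_closed repr_independence repr_independenceD)
  finally show ?thesis .
qed

lemma (in group) set_mult_eq_carrier_iff_rcosets_subset:
  assumes "subgroup K G" "A \<subseteq> carrier G"
  shows "A <#> K = carrier G \<longleftrightarrow> rcosets K \<subseteq> (\<lambda>a. K #> inv a) ` A"
proof -
  have mem: "g \<in> A <#> K \<longleftrightarrow> K #> inv g \<in> (\<lambda>a. K #> inv a) ` A" if "g \<in> carrier G" for g
  proof -
    have "g \<in> A <#> K \<longleftrightarrow> (\<exists>a\<in>A. g \<in> a <# K)"
      by (auto simp: set_mult_def l_coset_def)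
    also have "\<dots> \<longleftrightarrow> (\<exists>a\<in>A. K #> inv g = K #> inv a)"
      using mem_l_coset_iff_rcos_inv_eq[OF assms(1) _ that] assms(2) by blast
    finally show ?thesis
      by (auto simp: image_iff)
  qed
  have "rcosets K = (\<lambda>g. K #> inv g) ` carrier G"
    unfolding RCOSETS_def by (force intro: image_eqI[where x = "inv _"])
  moreover have "A <#> K \<subseteq> carrier G"
    using assms(2) subgroup.subset[OF assms(1)] by (rule setmult_subset_G)
  ultimately show ?thesis
    using mem by auto
qed

lemma (in group) card_rcosets_le_card:
  assumes "subgroup K G" "A \<subseteq> carrier G" "finite A" "A <#> K = carrier G"
  shows "card (rcosets K) \<le> card A"
proof -
  have "rcosets K \<subseteq> (\<lambda>a. K #> inv a) ` A"
    using assms set_mult_eq_carrier_iff_rcosets_subset by blast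
  then have "card (rcosets K) \<le> card ((\<lambda>a. K #> inv a) ` A)"
    using assms(3) by (intro card_mono finite_imageI)
  also have "\<dots> \<le> card A"
    using assms(3) by (rule card_image_le)
  finally show ?thesis .
qed

lemma (in group) eventually_set_mult_eq_carrier:
  assumes "subgroup K G" "finite (rcosets K)" "mono A" "(\<Union>n. A n) = carrier G"
  shows "eventually (\<lambda>n. A n <#> K = carrier G) sequentially"
proof -
  have carrier: "A n \<subseteq> carrier G" for n
    using assms(4) by blast
  have "eventually (\<lambda>n. c \<in> (\<lambda>a. K #> inv a) ` A n) sequentially" if "c \<in> rcosets K" for c
  proof -
    obtain x where x: "x \<in> carrier G" "c = K #> x"
      using \<open>c \<in> rcosets K\<close> unfolding RCOSETS_def by blast
    then obtain m where m: "inv x \<in> A m"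
      using assms(4) by blast
    have c: "c = K #> inv (inv x)"
      using x by simp
    show ?thesis
    proof (rule eventually_sequentiallyI)
      fix n assume "m \<le> n"
      then have "inv x \<in> A n"
        using m monoD[OF assms(3)] by blast
      then show "c \<in> (\<lambda>a. K #> inv a) ` A n"
        using c by (rule rev_image_eqI)
    qed
  qed
  then have "eventually (\<lambda>n. \<forall>c\<in>rcosets K. c \<in> (\<lambda>a. K #> inv a) ` A n) sequentially"
    by (intro eventually_ball_finite assms(2) ballI)
  then show ?thesis
    by (rule eventually_mono) (use set_mult_eq_carrier_iff_rcosets_subset[OF assms(1) carrier] in blast)
qed

lemma (in group) coset_diam_covers:
  assumes "S \<subseteq> carrier G" "\<one> \<in> S" "\<forall>s\<in>S. inv s \<in> S" "generate G S = carrier G"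
    and "subgroup K G" "finite (rcosets K)"
  shows "1 \<le> coset_diam G S K" "set_power G S (coset_diam G S K) <#> K = carrier G"
proof -
  have "eventually (\<lambda>n. n \<ge> 1 \<and> set_power G S n <#> K = carrier G) sequentially"
    using eventually_set_mult_eq_carrier[OF assms(5,6) mono_set_power[OF assms(1,2)]
        UN_set_power_eq_carrier[OF assms(1,3,4)]]
    by (simp add: eventually_conj_iff eventually_ge_at_top)
  then have "\<exists>n. n \<ge> 1 \<and> set_power G S n <#> K = carrier G"
    using eventually_happens'[OF trivial_limit_sequentially] by blast
  then show "1 \<le> coset_diam G S K" "set_power G S (coset_diam G S K) <#> K = carrier G"
    unfolding coset_diam_def by (metis (mono_tags, lifting) LeastI_ex)+
qed

lemma powr_le_of_le_mult_power:
  fixes x y C :: real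
  assumes "0 \<le> x" "0 < C" "0 \<le> y" "0 < d" "x \<le> C * y ^ d"
  shows "x powr (1 / real d) \<le> C powr (1 / real d) * y"
proof -
  have "x powr (1 / real d) \<le> (C * y ^ d) powr (1 / real d)"
    by (rule powr_mono2) (use assms in auto)
  also have "\<dots> = C powr (1 / real d) * (y powr real d) powr (1 / real d)"
    using assms by (simp add: powr_mult powr_realpow')
  also have "\<dots> = C powr (1 / real d) * y"
    using assms by (simp add: powr_powr)
  finally show ?thesis .
qed

theorem lemma2p2:
  fixes G :: "('a, 'b) monoid_scheme" and S :: "'a set" and d :: nat
  assumes "group G"
    and "finite S" and "S \<subseteq> carrier G" and "\<one>\<^bsub>G\<^esub> \<in> S"
    and "\<forall>s\<in>S. inv\<^bsub>G\<^esub> s \<in> S"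
    and "generate G S = carrier G"
    and "d > 0"
    and "\<exists>C>0. \<forall>n::nat. n \<ge> 1 \<longrightarrow> real (card (set_power G S n)) \<le> C * real n ^ d"
  shows "unif_almost_flat_cosets G S (1 / real d)"
proof -
  interpret group G by fact
  obtain C where C: "C > 0" "\<And>n::nat. n \<ge> 1 \<Longrightarrow> real (card (set_power G S n)) \<le> C * real n ^ d"
    using assms(8) by blast
  have "real (coset_diam G S K) \<ge> 1 / C powr (1 / real d) * real (card (rcosets\<^bsub>G\<^esub> K)) powr (1 / real d)"
    if K: "subgroup K G" "finite (rcosets\<^bsub>G\<^esub> K)" for K
  proof -
    let ?n = "coset_diam G S K"
    have n: "1 \<le> ?n" "set_power G S ?n <#>\<^bsub>G\<^esub> K = carrier G"
      using coset_diam_covers[OF assms(3-6) K] by auto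
    have "card (rcosets\<^bsub>G\<^esub> K) \<le> card (set_power G S ?n)"
      using n(2) set_power_subset_carrier[OF assms(3)]
      by (intro card_rcosets_le_card K finite_set_power assms(2))
    also have "\<dots> \<le> C * real ?n ^ d"
      using C(2) n(1) by blast
    finally have "real (card (rcosets\<^bsub>G\<^esub> K)) powr (1 / real d) \<le> C powr (1 / real d) * real ?n"
      using C(1) assms(7) by (intro powr_le_of_le_mult_power) auto
    then show ?thesis
      using C(1) by (simp add: field_simps)
  qed
  moreover have "1 / C powr (1 / real d) > 0"
    using C(1) by simp
  ultimately show ?thesis
    unfolding unif_almost_flat_cosets_def by blast
qed

end
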